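(* Let $(X,d,\kappa)$ be a digital metric space where $d$ is an $\ell_p$ metric for some $1\le p\le\infty$. Suppose $T:X\to X$ satisfies $d(T(x),T(y))\le\psi(d(x,y))$ for all $x,y\in X$, where $\psi:[0,\infty)\to[0,\infty)$ is monotone nondecreasing and satisfies $\lim_{n\to\infty}\psi^n(t)=0$ for all $t>0$ ($\psi^n$ the $n$-fold composition). Then $T$ has a unique fixed point.
   Context: A digital metric space is a triple $(X,d,\kappa)$ where $X\subset\mathbb{Z}^n$ for some positive integer $n$, $\kappa$ is an adjacency relation on $X$, and $d$ is a metric on $X$. The $\ell_p$ metric on $\mathbb{Z}^n$ is $d(x,y)=(\sum_i|x_i-y_i|^p)^{1/p}$ for $1\le p<\infty$ and $\max_i|x_i-y_i|$ for $p=\infty$. *)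

theory Defs
  imports "HOL-Analysis.Analysis"
begin

text \<open>Points of Z^n are modelled as vectors int ^ 'n, with 'n a finite index type
 (so n = CARD('n) is arbitrary but fixed). The exponent p ranges over [1, infinity],
 modelled as an extended real.\<close>

definition lp_dist :: "ereal \<Rightarrow> int ^ 'n \<Rightarrow> int ^ 'n \<Rightarrow> real" where
  "lp_dist p x y =
     (if p = \<infinity> then Max (range (\<lambda>i. real_of_int \<bar>x $ i - y $ i\<bar>))
      else (\<Sum>i\<in>UNIV. real_of_int \<bar>x $ i - y $ i\<bar> powr real_of_ereal p) powr (1 / real_of_ereal p))"

definition adjacency_relation :: "'a set \<Rightarrow> ('a \<Rightarrow> 'a \<Rightarrow> bool) \<Rightarrow> bool" where
  "adjacency_relation X \<kappa> \<longleftrightarrow>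
     (\<forall>x y. \<kappa> x y \<longrightarrow> x \<in> X \<and> y \<in> X) \<and>
     (\<forall>x y. \<kappa> x y \<longrightarrow> \<kappa> y x) \<and> (\<forall>x. \<not> \<kappa> x x)"

end

theory Submission
  imports Defs
begin

text \<open>Distinct points of \<open>\<int>\<^sup>n\<close> are at \<open>\<ell>\<^sub>p\<close>-distance at least 1, so the
  space is uniformly discrete. The condition \<open>\<psi>\<^sup>n(t) \<rightarrow> 0\<close> together with monotonicity
  forces \<open>\<psi>(t) < t\<close> for \<open>t > 0\<close>, which gives uniqueness. For existence, the distances
  between consecutive points of an orbit are bounded by \<open>\<psi>\<^sup>n(d(x\<^sub>0, T x\<^sub>0)) \<rightarrow> 0\<close>,
  so eventually they drop below 1, i.e. the orbit becomes stationary at a fixed point.\<close>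

lemma coord_dist_le_lp_dist_infinity:
  "real_of_int \<bar>x $ i - y $ i\<bar> \<le> lp_dist \<infinity> x y"
  unfolding lp_dist_def by (simp add: Max_ge)

lemma lp_dist_nonneg: "0 \<le> lp_dist p x y"
proof (cases "p = \<infinity>")
  case True
  have "0 \<le> real_of_int \<bar>x $ undefined - y $ undefined\<bar>"
    by simp
  also have "\<dots> \<le> lp_dist \<infinity> x y"
    by (rule coord_dist_le_lp_dist_infinity)
  finally show ?thesis
    using True by simp
qed (simp add: lp_dist_def)

lemma lp_dist_ge_one:
  fixes x y :: "int ^ 'n"
  assumes "1 \<le> p" and "x \<noteq> y"
  shows "1 \<le> lp_dist p x y"
proof -
  obtain i where "x $ i \<noteq> y $ i"
    using assms(2) by (metis vec_eq_iff)
  then have coord: "1 \<le> real_of_int \<bar>x $ i - y $ i\<bar>"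
    by linarith
  show ?thesis
  proof (cases "p = \<infinity>")
    case True
    with order_trans[OF coord coord_dist_le_lp_dist_infinity] show ?thesis
      by simp
  next
    case False
    define q where "q = real_of_ereal p"
    have "1 \<le> q"
      using assms(1) False unfolding q_def by (cases p) auto
    have "1 \<le> real_of_int \<bar>x $ i - y $ i\<bar> powr q"
      using coord \<open>1 \<le> q\<close> by (simp add: ge_one_powr_ge_zero)
    also have "\<dots> \<le> (\<Sum>j\<in>UNIV. real_of_int \<bar>x $ j - y $ j\<bar> powr q)"
      by (rule member_le_sum) auto
    finally have "1 \<le> (\<Sum>j\<in>UNIV. real_of_int \<bar>x $ j - y $ j\<bar> powr q) powr (1 / q)"
      using \<open>1 \<le> q\<close> by (simp add: ge_one_powr_ge_zero)
    then show ?thesis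
      using False by (simp add: lp_dist_def q_def)
  qed
qed

lemma less_if_iterates_tendsto_zero:
  fixes \<psi> :: "real \<Rightarrow> real"
  assumes "mono_on {0..} \<psi>" and "(\<lambda>n. (\<psi> ^^ n) t) \<longlonglongrightarrow> 0" and "0 < t"
  shows "\<psi> t < t"
proof (rule ccontr)
  assume "\<not> \<psi> t < t"
  have "t \<le> (\<psi> ^^ n) t" for n
  proof (induction n)
    case (Suc n)
    then have "\<psi> t \<le> \<psi> ((\<psi> ^^ n) t)"
      using \<open>0 < t\<close> by (intro mono_onD[OF assms(1)]) auto
    with \<open>\<not> \<psi> t < t\<close> show ?case
      by simp
  qed simp
  then have "t \<le> 0"
    using assms(2) by (intro LIMSEQ_le_const) auto
  with \<open>0 < t\<close> show False
    by simp
qed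

lemma funpow_mem_if_closed:
  assumes "x \<in> X" and "\<forall>x\<in>X. T x \<in> X"
  shows "(T ^^ n) x \<in> X"
  using assms by (induction n) auto

lemma orbit_step_dist_le_iterate:
  fixes d :: "'a \<Rightarrow> 'a \<Rightarrow> real" and \<psi> :: "real \<Rightarrow> real"
  assumes "x \<in> X" and "\<forall>x\<in>X. T x \<in> X"
    and "\<forall>x\<in>X. \<forall>y\<in>X. d (T x) (T y) \<le> \<psi> (d x y)"
    and "\<And>x y. 0 \<le> d x y" and "mono_on {0..} \<psi>"
  shows "d ((T ^^ n) x) ((T ^^ Suc n) x) \<le> (\<psi> ^^ n) (d x (T x))"
proof (induction n)
  case (Suc n)
  have "d ((T ^^ Suc n) x) ((T ^^ Suc (Suc n)) x) \<le> \<psi> (d ((T ^^ n) x) ((T ^^ Suc n) x))"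
    using assms(2,3) funpow_mem_if_closed[OF assms(1,2), of n] by auto
  \<comment> \<open>The induction hypothesis puts \<open>(\<psi> ^^ n) (d x (T x))\<close> into the domain \<open>{0..}\<close>
    of monotonicity, so no nonnegativity of \<open>\<psi>\<close> is needed.\<close>
  also have "\<dots> \<le> \<psi> ((\<psi> ^^ n) (d x (T x)))"
    using Suc assms(4) order_trans[OF assms(4) Suc]
    by (intro mono_onD[OF assms(5)]) auto
  finally show ?case
    by simp
qed simp

lemma unique_fixed_point_if_uniformly_discrete:
  fixes d :: "'a \<Rightarrow> 'a \<Rightarrow> real" and \<psi> :: "real \<Rightarrow> real"
  assumes "X \<noteq> {}" and "0 < \<delta>"
    and "\<And>x y. 0 \<le> d x y"
    and separated: "\<And>x y. x \<in> X \<Longrightarrow> y \<in> X \<Longrightarrow> x \<noteq> y \<Longrightarrow> \<delta> \<le> d x y"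
    and "\<forall>x\<in>X. T x \<in> X"
    and contr: "\<forall>x\<in>X. \<forall>y\<in>X. d (T x) (T y) \<le> \<psi> (d x y)"
    and "mono_on {0..} \<psi>"
    and iterates: "\<forall>t>0. (\<lambda>n. (\<psi> ^^ n) t) \<longlonglongrightarrow> 0"
  shows "\<exists>!x. x \<in> X \<and> T x = x"
proof (rule ex_ex1I)
  obtain x where "x \<in> X"
    using assms(1) by blast
  note orbit = funpow_mem_if_closed[OF \<open>x \<in> X\<close> assms(5)]
  obtain n where "(\<psi> ^^ n) (d x (T x)) < \<delta>"
  proof (cases "d x (T x) = 0")
    case True
    with that[of 0] \<open>0 < \<delta>\<close> show thesis
      by simp
  next
    case False
    then have "(\<lambda>n. (\<psi> ^^ n) (d x (T x))) \<longlonglongrightarrow> 0"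
      using iterates assms(3) by (simp add: order_less_le)
    from order_tendstoD(2)[OF this \<open>0 < \<delta>\<close>]
    have "\<forall>\<^sub>F n in sequentially. (\<psi> ^^ n) (d x (T x)) < \<delta>" .
    with that show thesis
      by (auto simp: eventually_sequentially)
  qed
  then have "d ((T ^^ n) x) (T ((T ^^ n) x)) < \<delta>"
    using orbit_step_dist_le_iterate[OF \<open>x \<in> X\<close> assms(5) contr assms(3,7), of n] by simp
  then have "T ((T ^^ n) x) = (T ^^ n) x"
    using separated[OF orbit[of n] orbit[of "Suc n"]] by force
  with orbit show "\<exists>x. x \<in> X \<and> T x = x"
    by blast
next
  fix x y
  assume fixed: "x \<in> X \<and> T x = x" "y \<in> X \<and> T y = y"
  show "x = y"
  proof (rule ccontr)
    assume "x \<noteq> y"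
    then have "0 < d x y"
      using separated fixed \<open>0 < \<delta>\<close> by fastforce
    moreover have "d x y \<le> \<psi> (d x y)"
      using contr fixed by force
    ultimately show False
      using less_if_iterates_tendsto_zero[OF assms(7)] iterates by force
  qed
qed

theorem theorem8p7:
  fixes X :: "(int ^ 'n) set" and \<kappa> :: "int ^ 'n \<Rightarrow> int ^ 'n \<Rightarrow> bool"
    and p :: ereal and T :: "int ^ 'n \<Rightarrow> int ^ 'n" and \<psi> :: "real \<Rightarrow> real"
  assumes "X \<noteq> {}"
    and "adjacency_relation X \<kappa>"
    and "1 \<le> p"
    and "\<forall>x\<in>X. T x \<in> X"
    and "\<forall>x\<in>X. \<forall>y\<in>X. lp_dist p (T x) (T y) \<le> \<psi> (lp_dist p x y)"
    and "\<forall>t\<ge>0. \<psi> t \<ge> 0"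
    and "mono_on {0..} \<psi>"
    and "\<forall>t>0. (\<lambda>n. (\<psi> ^^ n) t) \<longlonglongrightarrow> 0"
  shows "\<exists>!x. x \<in> X \<and> T x = x"
  using unique_fixed_point_if_uniformly_discrete[OF assms(1) zero_less_one lp_dist_nonneg
      lp_dist_ge_one[OF assms(3)] assms(4,5,7,8)]
  by blast

end
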